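(* The unit interval $I=[0,1]$ and, for every integer $n \ge 1$, the sphere $S^n$ are reconstructible.
   Context: For a topological space $X$ and $x \in X$, the set $X\setminus\{x\}$ carries the subspace topology. A card of $X$ is a space homeomorphic to $X \setminus \{x\}$ for some $x \in X$. The deck of $X$ is $\mathcal{D}(X)=\{[X\setminus\{x\}]_\sim : x \in X\}$, where $[Y]_\sim$ denotes the homeomorphism class of $Y$. A space $Z$ is a reconstruction of $X$ if $\mathcal{D}(Z)=\mathcal{D}(X)$. A space $X$ is reconstructible if every reconstruction of $X$ is homeomorphic to $X$. *)

theory Defs
  imports "HOL-Analysis.Analysis"
begin

definition card_at :: "'a topology \<Rightarrow> 'a \<Rightarrow> 'a topology" where
  "card_at X x = subtopology X (topspace X - {x})"

text \<open>Equality of decks (sets of homeomorphism classes of cards); the two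
spaces may live on different carrier types.\<close>
definition same_deck :: "'a topology \<Rightarrow> 'b topology \<Rightarrow> bool" where
  "same_deck X Z \<longleftrightarrow>
     (\<forall>x\<in>topspace X. \<exists>z\<in>topspace Z. card_at X x homeomorphic_space card_at Z z) \<and>
     (\<forall>z\<in>topspace Z. \<exists>x\<in>topspace X. card_at Z z homeomorphic_space card_at X x)"

definition is_reconstruction :: "'b topology \<Rightarrow> 'a topology \<Rightarrow> bool" where
  "is_reconstruction Z X \<longleftrightarrow> same_deck Z X"

text \<open>X is reconstructible with respect to reconstructions carried by type 'b.
Reconstructibility in the paper's sense is this property for all types 'b.\<close>
definition reconstructible_in :: "'a topology \<Rightarrow> 'b itself \<Rightarrow> bool" where
  "reconstructible_in X _ \<longleftrightarrow>
     (\<forall>Z :: 'b topology. is_reconstruction Z X \<longrightarrow> Z homeomorphic_space X)"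

end

theory Submission
  imports Defs "HOL-Homology.Invariance_of_Domain"
begin

text \<open>
  Let \<open>Z\<close> be a reconstruction of a compact Hausdorff space \<open>X\<close> with infinitely many points.
  Every card of \<open>Z\<close> is Hausdorff, which already forces \<open>Z\<close> to be Hausdorff. Pick a card
  \<open>Z - {q}\<close> homeomorphic, via \<open>h\<close>, to \<open>X - {p}\<close>; extending \<open>h\<close> by \<open>q \<mapsto> p\<close> gives a
  continuous bijection \<open>H : Z \<rightarrow> X\<close>, continuity at \<open>q\<close> coming from compactness of \<open>X\<close>:
  the closed sets of \<open>X\<close> avoiding \<open>p\<close> are compact, so their preimages are closed.
  It remains to see that \<open>H\<close> is open. Local properties of \<open>Z\<close> can be read off its cards,
  since \<open>Z\<close> is covered by two open cards. For \<open>S\<^sup>n\<close>, \<open>Z\<close> is therefore locally Euclidean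
  of dimension \<open>n\<close>, and invariance of domain makes the injective map \<open>H\<close> open. For \<open>[0, 1]\<close>
  take \<open>p = 0\<close>: \<open>Z\<close> is locally connected without isolated points, so a small connected
  neighbourhood of \<open>q\<close> is mapped onto a connected set containing \<open>0\<close> and some \<open>t > 0\<close>,
  hence onto a neighbourhood \<open>[0, t]\<close> of \<open>H q = 0\<close>.
\<close>

lemma ex_in_infinite_notin_finite: "infinite S \<Longrightarrow> finite F \<Longrightarrow> \<exists>x\<in>S. x \<notin> F"
  by (metis finite_subset subsetI)

lemma topspace_card_at [simp]: "topspace (card_at X x) = topspace X - {x}"
  by (auto simp: card_at_def)

lemma t1_space_openin_topspace_delete: "t1_space X \<Longrightarrow> openin X (topspace X - {x})"
  by (simp add: t1_space_openin_delete_alt)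

lemma openin_card_at_iff:
  assumes "t1_space X" shows "openin (card_at X x) U \<longleftrightarrow> openin X U \<and> x \<notin> U"
proof -
  have "openin X (topspace X - {x})"
    using t1_space_openin_topspace_delete[OF assms] .
  then have "openin (card_at X x) U \<longleftrightarrow> openin X U \<and> U \<subseteq> topspace X - {x}"
    by (simp add: card_at_def openin_open_subtopology)
  then show ?thesis
    using openin_subset[of X U] by auto
qed

lemma infinite_topspace_homeomorphic:
  assumes "X homeomorphic_space Y" "infinite (topspace X)"
  shows "infinite (topspace Y)"
proof -
  obtain f where "homeomorphic_map X Y f"
    using assms(1) homeomorphic_space by blast
  then have "f ` topspace X = topspace Y" "inj_on f (topspace X)"
    using homeomorphic_imp_surjective_map homeomorphic_imp_injective_map by blast+
  then show ?thesis
    using assms(2) finite_image_iff by metis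
qed

lemma t1_space_if_Hausdorff_cards:
  assumes H: "\<And>z. z \<in> topspace Z \<Longrightarrow> Hausdorff_space (card_at Z z)"
    and inf: "infinite (topspace Z)"
  shows "t1_space Z"
  unfolding t1_space_closedin_singleton
proof
  fix z assume z: "z \<in> topspace Z"
  have small_closed: "\<exists>C. closedin Z C \<and> z \<in> C \<and> C \<subseteq> {z, w}"
    if "w \<in> topspace Z" "w \<noteq> z" for w
  proof -
    have "closedin (card_at Z w) {z}"
      using closedin_t1_singleton[OF Hausdorff_imp_t1_space[OF H[OF that(1)]]] z that by simp
    then obtain C where "closedin Z C" "{z} = C \<inter> (topspace Z - {w})"
      by (auto simp: card_at_def closedin_subtopology)
    then show ?thesis
      using closedin_subset by fastforce
  qed
  obtain d where d: "d \<in> topspace Z" "d \<notin> {z}"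
    using ex_in_infinite_notin_finite[OF inf, of "{z}"] by auto
  obtain e where e: "e \<in> topspace Z" "e \<notin> {z, d}"
    using ex_in_infinite_notin_finite[OF inf, of "{z, d}"] by auto
  obtain C D where "closedin Z C" "z \<in> C" "C \<subseteq> {z, d}" "closedin Z D" "z \<in> D" "D \<subseteq> {z, e}"
    using small_closed[OF d(1)] small_closed[OF e(1)] d(2) e(2) by blast
  moreover have "C \<inter> D = {z}"
    using calculation e(2) by auto
  ultimately show "closedin Z {z}"
    by (metis closedin_Int)
qed

lemma Hausdorff_space_if_Hausdorff_cards:
  assumes H: "\<And>z. z \<in> topspace Z \<Longrightarrow> Hausdorff_space (card_at Z z)"
    and inf: "infinite (topspace Z)"
  shows "Hausdorff_space Z"
  unfolding Hausdorff_space_def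
proof (intro allI impI)
  fix a b assume ab: "a \<in> topspace Z \<and> b \<in> topspace Z \<and> a \<noteq> b"
  obtain c where c: "c \<in> topspace Z" "c \<notin> {a, b}"
    using ex_in_infinite_notin_finite[OF inf, of "{a, b}"] by auto
  then have "a \<in> topspace (card_at Z c)" "b \<in> topspace (card_at Z c)"
    using ab by auto
  then obtain U V where "openin (card_at Z c) U" "openin (card_at Z c) V"
      "a \<in> U" "b \<in> V" "disjnt U V"
    using H[OF c(1)] ab unfolding Hausdorff_space_def by meson
  then show "\<exists>U V. openin Z U \<and> openin Z V \<and> a \<in> U \<and> b \<in> V \<and> disjnt U V"
    using openin_card_at_iff[OF t1_space_if_Hausdorff_cards[OF H inf]] by blast
qed

lemma closedin_image_inverse_card_homeomorphism:
  assumes "Hausdorff_space Z" "compact_space X"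
    and hk: "homeomorphic_maps (card_at Z q) (card_at X p) h k"
    and C: "closedin X C" "p \<notin> C"
  shows "closedin Z (k ` C)"
proof -
  have "compactin (card_at X p) C"
    using closedin_compact_space[OF assms(2) C(1)] closedin_subset[OF C(1)] C(2)
    by (auto simp: card_at_def compactin_subtopology)
  then have "compactin (card_at Z q) (k ` C)"
    using hk image_compactin homeomorphic_maps_def by blast
  then show ?thesis
    using assms(1) compactin_imp_closedin by (auto simp: card_at_def compactin_subtopology)
qed

lemma homeomorphic_maps_card_atD:
  assumes "homeomorphic_maps (card_at Z q) (card_at X p) h k"
  shows "z \<in> topspace Z - {q} \<Longrightarrow> h z \<in> topspace X - {p} \<and> k (h z) = z"
    and "x \<in> topspace X - {p} \<Longrightarrow> k x \<in> topspace Z - {q} \<and> h (k x) = x"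
  using assms by (auto simp: homeomorphic_maps_def continuous_map_def)

lemma closedin_insert_card_at:
  assumes "t1_space Z" "q \<in> topspace Z" "closedin (card_at Z q) A"
  shows "closedin Z (insert q A)"
proof -
  obtain D where D: "closedin Z D" "A = D \<inter> (topspace Z - {q})"
    using assms(3) by (auto simp: card_at_def closedin_subtopology)
  then have "insert q A = D \<union> {q}"
    using closedin_subset[OF D(1)] by auto
  then show ?thesis
    using closedin_Un[OF D(1) closedin_t1_singleton[OF assms(1,2)]] by simp
qed

lemma continuous_map_extend_card_homeomorphism:
  assumes Z: "Hausdorff_space Z" and X: "compact_space X" and q: "q \<in> topspace Z"
    and p: "p \<in> topspace X" and hk: "homeomorphic_maps (card_at Z q) (card_at X p) h k"
  shows "continuous_map Z X (\<lambda>z. if z = q then p else h z)"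
proof -
  define H where "H = (\<lambda>z. if z = q then p else h z)"
  note h = homeomorphic_maps_card_atD(1)[OF hk] and k = homeomorphic_maps_card_atD(2)[OF hk]
  have "closedin Z {z \<in> topspace Z. H z \<in> C}" if C: "closedin X C" for C
  proof (cases "p \<in> C")
    case False
    have "{z \<in> topspace Z. H z \<in> C} = k ` C"
    proof
      show "{z \<in> topspace Z. H z \<in> C} \<subseteq> k ` C"
        using h False by (force simp: H_def)
      show "k ` C \<subseteq> {z \<in> topspace Z. H z \<in> C}"
        using k False closedin_subset[OF C] by (force simp: H_def)
    qed
    then show ?thesis
      using closedin_image_inverse_card_homeomorphism[OF Z X hk C False] by simp
  next
    case True
    have "closedin (card_at X p) ((topspace X - {p}) \<inter> C)"
      unfolding card_at_def using C by (rule closedin_subtopology_Int_closed)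
    moreover have "(topspace X - {p}) \<inter> C = C - {p}"
      using closedin_subset[OF C] by blast
    moreover have "continuous_map (card_at Z q) (card_at X p) h"
      using hk by (simp add: homeomorphic_maps_def)
    ultimately have "closedin (card_at Z q) {z \<in> topspace Z - {q}. h z \<in> C - {p}}"
      using closedin_continuous_map_preimage by fastforce
    moreover have "{z \<in> topspace Z. H z \<in> C} = insert q {z \<in> topspace Z - {q}. h z \<in> C - {p}}"
      using h q True by (auto simp: H_def)
    ultimately show ?thesis
      using closedin_insert_card_at[OF Hausdorff_imp_t1_space[OF Z] q] by simp
  qed
  moreover have "H \<in> topspace Z \<rightarrow> topspace X"
    using h p by (auto simp: H_def)
  ultimately show ?thesis
    unfolding H_def[symmetric] continuous_map_closedin by blast
qed

lemma bij_betw_extend_card_homeomorphism: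
  assumes q: "q \<in> topspace Z" and p: "p \<in> topspace X"
    and hk: "homeomorphic_maps (card_at Z q) (card_at X p) h k"
  shows "bij_betw (\<lambda>z. if z = q then p else h z) (topspace Z) (topspace X)"
  using homeomorphic_maps_card_atD[OF hk] p q
  by (intro bij_betw_byWitness[where f' = "\<lambda>x. if x = p then q else k x"]) fastforce+

lemma infinite_topspace_reconstruction:
  assumes deck: "same_deck Z X" and inf: "infinite (topspace X)"
  shows "infinite (topspace Z)"
proof -
  obtain x where "x \<in> topspace X"
    using infinite_imp_nonempty[OF inf] by blast
  then obtain z where "card_at X x homeomorphic_space card_at Z z"
    using deck by (auto simp: same_deck_def)
  moreover have "infinite (topspace (card_at X x))"
    using inf by simp
  ultimately have "infinite (topspace (card_at Z z))"
    by (rule infinite_topspace_homeomorphic)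
  then show ?thesis
    by simp
qed

lemma Hausdorff_space_reconstruction:
  assumes deck: "same_deck Z X" and X: "Hausdorff_space X" "infinite (topspace X)"
  shows "Hausdorff_space Z"
proof (rule Hausdorff_space_if_Hausdorff_cards)
  show "infinite (topspace Z)"
    using infinite_topspace_reconstruction[OF deck X(2)] .
  fix z assume "z \<in> topspace Z"
  then obtain x where "card_at Z z homeomorphic_space card_at X x"
    using deck by (auto simp: same_deck_def)
  moreover have "Hausdorff_space (card_at X x)"
    by (simp add: card_at_def Hausdorff_space_subtopology X(1))
  ultimately show "Hausdorff_space (card_at Z z)"
    using homeomorphic_Hausdorff_space by blast
qed

lemma open_card_cover_reconstruction:
  assumes deck: "same_deck Z X" and X: "Hausdorff_space X" "infinite (topspace X)"
    and z: "z \<in> topspace Z"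
  obtains w x where "openin Z (topspace Z - {w})" "w \<noteq> z" "x \<in> topspace X"
    "card_at Z w homeomorphic_space card_at X x"
proof -
  obtain w where w: "w \<in> topspace Z" "w \<notin> {z}"
    using ex_in_infinite_notin_finite[OF infinite_topspace_reconstruction[OF deck X(2)]] by blast
  then obtain x where x: "x \<in> topspace X" "card_at Z w homeomorphic_space card_at X x"
    using deck by (auto simp: same_deck_def)
  have "openin Z (topspace Z - {w})"
    using t1_space_openin_topspace_delete
      [OF Hausdorff_imp_t1_space[OF Hausdorff_space_reconstruction[OF deck X]]] .
  moreover have "w \<noteq> z"
    using w(2) by simp
  ultimately show ?thesis
    using that x by blast
qed

lemma reconstructible_if_extensions_open:
  assumes X: "compact_space X" "Hausdorff_space X" "infinite (topspace X)" and p: "p \<in> topspace X"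
    and extension_open: "\<And>(Z :: 'b topology) q H. \<lbrakk>same_deck Z X; q \<in> topspace Z; H q = p;
      continuous_map Z X H; bij_betw H (topspace Z) (topspace X); open_map (card_at Z q) X H\<rbrakk>
      \<Longrightarrow> open_map Z X H"
  shows "reconstructible_in X TYPE('b)"
  unfolding reconstructible_in_def is_reconstruction_def
proof (intro allI impI)
  fix Z :: "'b topology" assume deck: "same_deck Z X"
  obtain q where q: "q \<in> topspace Z" "card_at X p homeomorphic_space card_at Z q"
    using deck p by (auto simp: same_deck_def)
  then have "card_at Z q homeomorphic_space card_at X p"
    using homeomorphic_space_sym by blast
  then obtain h k where hk: "homeomorphic_maps (card_at Z q) (card_at X p) h k"
    unfolding homeomorphic_space_def by blast
  define H where "H z = (if z = q then p else h z)" for z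
  have cont: "continuous_map Z X H"
    unfolding H_def using continuous_map_extend_card_homeomorphism
      [OF Hausdorff_space_reconstruction[OF deck X(2,3)] X(1) q(1) p hk] .
  have bij: "bij_betw H (topspace Z) (topspace X)"
    unfolding H_def using bij_betw_extend_card_homeomorphism[OF q(1) p hk] .
  have "openin X (topspace X - {p})"
    using t1_space_openin_topspace_delete[OF Hausdorff_imp_t1_space[OF X(2)]] .
  moreover have "open_map (card_at Z q) (card_at X p) h"
    using hk homeomorphic_imp_open_map homeomorphic_map_maps by blast
  ultimately have "open_map (card_at Z q) X h"
    unfolding card_at_def by (simp add: open_map_in_subtopology)
  then have "open_map (card_at Z q) X H"
    by (rule open_map_eq) (simp add: H_def)
  then have "open_map Z X H"
    using extension_open[OF deck q(1) _ cont bij] by (simp add: H_def)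
  then have "homeomorphic_map Z X H"
    using bijective_open_imp_homeomorphic_map[OF cont] bij unfolding bij_betw_def by blast
  then show "Z homeomorphic_space X"
    using homeomorphic_space by blast
qed

lemma locally_connected_space_reconstruction:
  assumes deck: "same_deck Z X"
    and X: "Hausdorff_space X" "infinite (topspace X)" "locally_connected_space X"
  shows "locally_connected_space Z"
  unfolding locally_connected_space
proof (intro allI impI)
  fix U z assume Uz: "openin Z U \<and> z \<in> U"
  then obtain w x where W: "openin Z (topspace Z - {w})" "w \<noteq> z" "x \<in> topspace X"
      "card_at Z w homeomorphic_space card_at X x"
    using open_card_cover_reconstruction[OF deck X(1,2)] openin_subset by blast
  have "locally_connected_space (card_at X x)"
    unfolding card_at_def using X(3) Hausdorff_imp_t1_space[OF X(1)]
    by (simp add: locally_connected_space_open_subset t1_space_openin_topspace_delete)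
  then have "locally_connected_space (card_at Z w)"
    using homeomorphic_locally_connected_space[OF W(4)] by blast
  moreover have "openin (card_at Z w) (U \<inter> (topspace Z - {w}))"
    unfolding card_at_def using Uz by (simp add: openin_subtopology_Int)
  moreover have "z \<in> U \<inter> (topspace Z - {w})"
    using Uz W(2) openin_subset by blast
  ultimately obtain V where V: "openin (card_at Z w) V" "connectedin (card_at Z w) V" "z \<in> V"
      "V \<subseteq> U \<inter> (topspace Z - {w})"
    unfolding locally_connected_space by meson
  then show "\<exists>V. openin Z V \<and> connectedin Z V \<and> z \<in> V \<and> V \<subseteq> U"
    using openin_trans_full[OF _ W(1)] by (auto simp: card_at_def connectedin_subtopology)
qed

lemma not_openin_singleton_reconstruction:
  assumes deck: "same_deck Z X"
    and X: "Hausdorff_space X" "infinite (topspace X)" "\<And>x. \<not> openin X {x}"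
  shows "\<not> openin Z {z}"
proof
  assume open_z: "openin Z {z}"
  then obtain w x where W: "openin Z (topspace Z - {w})" "w \<noteq> z" "x \<in> topspace X"
      "card_at Z w homeomorphic_space card_at X x"
    using open_card_cover_reconstruction[OF deck X(1,2)] openin_subset by blast
  then obtain f where f: "homeomorphic_map (card_at Z w) (card_at X x) f"
    using homeomorphic_space by blast
  have "openin (card_at Z w) {z}"
    using open_z W(2) openin_card_at_iff
      [OF Hausdorff_imp_t1_space[OF Hausdorff_space_reconstruction[OF deck X(1,2)]]]
    by blast
  then have "openin (card_at X x) {f z}"
    using homeomorphic_imp_open_map[OF f] unfolding open_map_def by (metis image_empty image_insert)
  then show False
    using X(3) openin_card_at_iff[OF Hausdorff_imp_t1_space[OF X(1)]] by blast
qed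

lemma openin_atLeastLessThan_Icc:
  fixes a b t :: real
  assumes "a < t" "t \<le> b"
  shows "openin (top_of_set {a..b}) {a..<t}"
proof -
  have "{a..b} \<inter> {..<t} = {a..<t}"
    using assms by auto
  then show ?thesis
    using openin_open_Int[of "{..<t}" "{a..b}"] by simp
qed

lemma open_map_into_interval_from_endpoint:
  fixes H :: "'a \<Rightarrow> real"
  assumes cont: "continuous_map Z (top_of_set {a..b}) H" and inj: "inj_on H (topspace Z)"
    and q: "q \<in> topspace Z" "H q = a"
    and card: "open_map (card_at Z q) (top_of_set {a..b}) H"
    and lc: "locally_connected_space Z" and perfect: "\<And>z. \<not> openin Z {z}"
  shows "open_map Z (top_of_set {a..b}) H"
  unfolding open_map_def
proof (intro allI impI)
  fix U assume U: "openin Z U"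
  have "openin (card_at Z q) (U \<inter> (topspace Z - {q}))"
    unfolding card_at_def using U by (simp add: openin_subtopology_Int)
  moreover have "U \<inter> (topspace Z - {q}) = U - {q}"
    using openin_subset[OF U] by blast
  ultimately have off_q: "openin (top_of_set {a..b}) (H ` (U - {q}))"
    using card unfolding open_map_def by metis
  show "openin (top_of_set {a..b}) (H ` U)"
  proof (cases "q \<in> U")
    case False
    then show ?thesis
      using off_q by simp
  next
    case True
    obtain V where V: "openin Z V" "connectedin Z V" "q \<in> V" "V \<subseteq> U"
      using lc True U unfolding locally_connected_space by meson
    obtain v where v: "v \<in> V" "v \<noteq> q"
      using perfect[of q] V(1,3) by (metis insertI1 subsetI subset_antisym singletonD)
    have vZ: "v \<in> topspace Z"
      using v(1) openin_subset[OF V(1)] by blast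
    have "H v \<in> {a..b}" "H v \<noteq> a"
      using continuous_map_image_subset_topspace[OF cont] vZ inj q v(2) inj_on_contraD by fastforce+
    then have t: "a < H v" "H v \<le> b"
      by auto
    have "connected (H ` V)"
      using connectedin_continuous_map_image[OF cont V(2)] by (simp add: connectedin_subtopology)
    then have "{a..H v} \<subseteq> H ` V"
      using connected_contains_Icc V(3) v(1) q(2) by (metis image_eqI)
    then have "{a..<H v} \<subseteq> H ` U"
      using V(4) by fastforce
    then have "H ` U = H ` (U - {q}) \<union> {a..<H v}"
      using True q(2) t by auto
    then show ?thesis
      using off_q openin_atLeastLessThan_Icc[OF t] by (simp add: openin_Un)
  qed
qed

lemma not_openin_singleton_closed_interval:
  fixes a b :: real assumes "a < b"
  shows "\<not> openin (top_of_set {a..b}) {y}"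
proof
  assume open_y: "openin (top_of_set {a..b}) {y}"
  then have "y \<in> {a..b}"
    using openin_subset by fastforce
  then have "closedin (top_of_set {a..b}) {y}"
    by (simp add: closedin_subtopology_Int_closed[of euclidean "{y}" "{a..b}", simplified])
  then have "{y} = {a..b}"
    using open_y connected_clopen[of "{a..b}"] by auto
  then show False
    using assms by (metis atLeastAtMost_singleton_iff singletonD less_irrefl)
qed

lemma reconstructible_closed_interval:
  fixes a b :: real assumes "a < b"
  shows "reconstructible_in (top_of_set {a..b}) TYPE('b)"
proof (rule reconstructible_if_extensions_open[where p = a])
  show "compact_space (top_of_set {a..b})" "Hausdorff_space (top_of_set {a..b})"
    by (simp_all add: compact_space_subtopology Hausdorff_space_subtopology)
  show "infinite (topspace (top_of_set {a..b}))" "a \<in> topspace (top_of_set {a..b})"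
    using assms by simp_all
  fix Z :: "'b topology" and q H
  assume deck: "same_deck Z (top_of_set {a..b})" and q: "q \<in> topspace Z" "H q = a"
    and cont: "continuous_map Z (top_of_set {a..b}) H"
    and bij: "bij_betw H (topspace Z) (topspace (top_of_set {a..b}))"
    and card: "open_map (card_at Z q) (top_of_set {a..b}) H"
  have X: "Hausdorff_space (top_of_set {a..b})" "infinite (topspace (top_of_set {a..b}))"
    using assms by (simp_all add: Hausdorff_space_subtopology)
  show "open_map Z (top_of_set {a..b}) H"
  proof (rule open_map_into_interval_from_endpoint[OF cont _ q card])
    show "inj_on H (topspace Z)"
      using bij bij_betw_def by blast
    show "locally_connected_space Z"
      using locally_connected_space_reconstruction[OF deck X] locally_connected_real_interval(1)
      by blast
    show "\<not> openin Z {z}" for z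
      using not_openin_singleton_reconstruction[OF deck X]
        not_openin_singleton_closed_interval[OF assms]
      by blast
  qed
qed

definition locally_Euclidean :: "nat \<Rightarrow> 'a topology \<Rightarrow> bool" where
  "locally_Euclidean n X \<longleftrightarrow>
     (\<forall>x\<in>topspace X. \<exists>U V. openin X U \<and> x \<in> U \<and> openin (Euclidean_space n) V \<and>
        subtopology X U homeomorphic_space subtopology (Euclidean_space n) V)"

lemma homeomorphic_map_restrict_open:
  assumes f: "homeomorphic_map (subtopology X U) (subtopology Y V) f"
    and W: "openin X W" "W \<subseteq> U" and V: "openin Y V"
  shows "openin Y (f ` W)" "subtopology X W homeomorphic_space subtopology Y (f ` W)"
proof -
  have W_sub: "W \<subseteq> topspace X \<inter> U"
    using W openin_subset by auto
  have surj: "f ` (topspace X \<inter> U) = topspace Y \<inter> V"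
    using homeomorphic_imp_surjective_map[OF f] by simp
  have "openin (subtopology X U) W"
    using openin_subtopology_Int[OF W(1), of U] W(2) by (simp add: inf.absorb1)
  then have "openin (subtopology Y V) (f ` W)"
    using homeomorphic_imp_open_map[OF f] open_map_def by blast
  then show "openin Y (f ` W)"
    using openin_trans_full V by blast
  have "homeomorphic_map (subtopology (subtopology X U) W)
      (subtopology (subtopology Y V) (f ` W)) f"
    by (rule homeomorphic_map_subtopologies[OF f]) (use W_sub surj in auto)
  moreover have "subtopology (subtopology X U) W = subtopology X W"
    using W(2) by (simp add: subtopology_subtopology Int_absorb1)
  moreover have "f ` W \<subseteq> V"
    using W_sub surj by blast
  then have "subtopology (subtopology Y V) (f ` W) = subtopology Y (f ` W)"
    by (simp add: subtopology_subtopology Int_absorb1)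
  ultimately show "subtopology X W homeomorphic_space subtopology Y (f ` W)"
    using homeomorphic_space by metis
qed

lemma locally_Euclidean_open_subtopology:
  assumes X: "locally_Euclidean n X" and S: "openin X S"
  shows "locally_Euclidean n (subtopology X S)"
  unfolding locally_Euclidean_def
proof
  fix x assume x: "x \<in> topspace (subtopology X S)"
  then obtain U V where U: "openin X U" "x \<in> U" "openin (Euclidean_space n) V"
      "subtopology X U homeomorphic_space subtopology (Euclidean_space n) V"
    using X unfolding locally_Euclidean_def by auto
  then obtain f where f: "homeomorphic_map (subtopology X U) (subtopology (Euclidean_space n) V) f"
    using homeomorphic_space by blast
  note chart = homeomorphic_map_restrict_open[OF f openin_Int[OF U(1) S] Int_lower1 U(3)]
  have "subtopology (subtopology X S) (U \<inter> S) = subtopology X (U \<inter> S)"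
    by (simp add: subtopology_subtopology Int_absorb1)
  then show "\<exists>U V. openin (subtopology X S) U \<and> x \<in> U \<and> openin (Euclidean_space n) V \<and>
      subtopology (subtopology X S) U homeomorphic_space subtopology (Euclidean_space n) V"
  proof (intro exI conjI)
    show "openin (subtopology X S) (U \<inter> S)"
      using U(1) by (simp add: openin_subtopology_Int)
    show "x \<in> U \<inter> S"
      using x U(2) by simp
  qed (use chart in auto)
qed

lemma homeomorphic_locally_Euclidean:
  assumes XY: "X homeomorphic_space Y" and X: "locally_Euclidean n X"
  shows "locally_Euclidean n Y"
  unfolding locally_Euclidean_def
proof
  fix y assume y: "y \<in> topspace Y"
  obtain g where g: "homeomorphic_map Y X g"
    using XY homeomorphic_space homeomorphic_space_sym by blast
  then have gy: "g y \<in> topspace X"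
    using y homeomorphic_imp_surjective_map by blast
  then obtain U V where U: "openin X U" "g y \<in> U" "openin (Euclidean_space n) V"
      "subtopology X U homeomorphic_space subtopology (Euclidean_space n) V"
    using X unfolding locally_Euclidean_def by blast
  define U' where "U' = {z \<in> topspace Y. g z \<in> U}"
  have "homeomorphic_map (subtopology Y U') (subtopology X U) g"
    by (rule homeomorphic_map_subtopologies[OF g])
      (use homeomorphic_imp_surjective_map[OF g] in \<open>auto simp: U'_def\<close>)
  then have "subtopology Y U' homeomorphic_space subtopology (Euclidean_space n) V"
    using U(4) homeomorphic_space homeomorphic_space_trans by blast
  moreover have "openin Y U'"
    unfolding U'_def
    using openin_continuous_map_preimage[OF homeomorphic_imp_continuous_map[OF g] U(1)] .
  ultimately show "\<exists>U V. openin Y U \<and> y \<in> U \<and> openin (Euclidean_space n) V \<and>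
      subtopology Y U homeomorphic_space subtopology (Euclidean_space n) V"
    using U(2,3) y unfolding U'_def by blast
qed

lemma locally_Euclidean_reconstruction:
  assumes deck: "same_deck Z X"
    and X: "Hausdorff_space X" "infinite (topspace X)" "locally_Euclidean n X"
  shows "locally_Euclidean n Z"
  unfolding locally_Euclidean_def
proof
  fix z assume z: "z \<in> topspace Z"
  obtain w x where W: "openin Z (topspace Z - {w})" "w \<noteq> z" "x \<in> topspace X"
      "card_at Z w homeomorphic_space card_at X x"
    using open_card_cover_reconstruction[OF deck X(1,2) z] .
  have "locally_Euclidean n (card_at X x)"
    unfolding card_at_def using locally_Euclidean_open_subtopology[OF X(3)]
      t1_space_openin_topspace_delete[OF Hausdorff_imp_t1_space[OF X(1)]] .
  then have "locally_Euclidean n (card_at Z w)"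
    using homeomorphic_locally_Euclidean homeomorphic_space_sym W(4) by blast
  moreover have "z \<in> topspace (card_at Z w)"
    using z W(2) by simp
  ultimately obtain U V where U: "openin (card_at Z w) U" "z \<in> U" "openin (Euclidean_space n) V"
      "subtopology (card_at Z w) U homeomorphic_space subtopology (Euclidean_space n) V"
    unfolding locally_Euclidean_def by blast
  have "U \<subseteq> topspace Z - {w}"
    using openin_subset[OF U(1)] by simp
  then have "subtopology (card_at Z w) U = subtopology Z U"
    by (simp add: card_at_def subtopology_subtopology Int_absorb1)
  moreover have "openin Z U"
    using U(1) W(1) openin_trans_full unfolding card_at_def by blast
  ultimately show "\<exists>U V. openin Z U \<and> z \<in> U \<and> openin (Euclidean_space n) V \<and>
      subtopology Z U homeomorphic_space subtopology (Euclidean_space n) V"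
    using U(2-4) by metis
qed

lemma open_map_if_locally_open:
  assumes "\<And>z. z \<in> topspace Z \<Longrightarrow> \<exists>U. openin Z U \<and> z \<in> U \<and> open_map (subtopology Z U) X f"
  shows "open_map Z X f"
  unfolding open_map_def
proof (intro allI impI)
  fix S assume S: "openin Z S"
  show "openin X (f ` S)"
    unfolding openin_subopen[of X "f ` S"]
  proof
    fix y assume "y \<in> f ` S"
    then obtain z where z: "z \<in> S" "y = f z"
      by blast
    then obtain U where U: "openin Z U" "z \<in> U" "open_map (subtopology Z U) X f"
      using assms openin_subset[OF S] by blast
    have "openin (subtopology Z U) (S \<inter> U)"
      using S by (simp add: openin_subtopology_Int)
    then have "openin X (f ` (S \<inter> U))"
      using U(3) open_map_def by blast
    then show "\<exists>T. openin X T \<and> y \<in> T \<and> T \<subseteq> f ` S"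
      using z U(2) by blast
  qed
qed

lemma open_map_Euclidean_space_injective:
  assumes V: "openin (Euclidean_space n) V"
    and g: "continuous_map (subtopology (Euclidean_space n) V) (Euclidean_space n) g" "inj_on g V"
  shows "open_map (subtopology (Euclidean_space n) V) (Euclidean_space n) g"
  unfolding open_map_def
  by (meson V g continuous_map_from_subtopology_mono inj_on_subset openin_imp_subset
      openin_trans_full invariance_of_domain_Euclidean_space)

lemma open_map_between_charts:
  assumes f: "continuous_map Z X f" "inj_on f (topspace Z)" and fU: "f ` U \<subseteq> W"
    and U: "openin (Euclidean_space n) V"
      "subtopology Z U homeomorphic_space subtopology (Euclidean_space n) V"
    and W: "openin X W" "subtopology X W homeomorphic_space subtopology (Euclidean_space n) V'"
  shows "open_map (subtopology Z U) X f"
proof -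
  let ?E = "Euclidean_space n"
  obtain \<phi> \<phi>' where \<phi>: "homeomorphic_maps (subtopology Z U) (subtopology ?E V) \<phi> \<phi>'"
    using U(2) homeomorphic_space_def by blast
  obtain \<psi> \<psi>' where \<psi>: "homeomorphic_maps (subtopology X W) (subtopology ?E V') \<psi> \<psi>'"
    using W(2) homeomorphic_space_def by blast
  have topV: "topspace (subtopology ?E V) = V"
    using openin_subset[OF U(1)] by auto
  have f_W: "continuous_map (subtopology Z U) (subtopology X W) f"
    using continuous_map_from_subtopology[OF f(1)] fU
    by (auto simp: continuous_map_in_subtopology)
  text \<open>Read in the two charts, \<open>f\<close> is a continuous injection from an open subset of
    \<open>\<real>\<^sup>n\<close> into \<open>\<real>\<^sup>n\<close>, which is open by invariance of domain.\<close>
  define g where "g = \<psi> \<circ> f \<circ> \<phi>'"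
  have g_cont: "continuous_map (subtopology ?E V) (subtopology ?E V') g"
    unfolding g_def using \<phi> f_W \<psi>
    by (meson continuous_map_compose homeomorphic_maps_def)
  have \<phi>'_back: "\<phi>' a \<in> topspace (subtopology Z U) \<and> \<phi> (\<phi>' a) = a" if "a \<in> V" for a
    using \<phi> that topV by (auto simp: homeomorphic_maps_def continuous_map_def)
  have \<psi>_back: "\<psi>' (\<psi> x) = x" if "x \<in> topspace (subtopology X W)" for x
    using \<psi> that by (simp add: homeomorphic_maps_def)
  have f_into: "f x \<in> topspace (subtopology X W)" if "x \<in> topspace (subtopology Z U)" for x
    using f_W that continuous_map_image_subset_topspace by blast
  have "inj_on g V"
  proof (rule inj_onI)
    fix a b assume ab: "a \<in> V" "b \<in> V" "g a = g b"
    then have "f (\<phi>' a) = f (\<phi>' b)"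
      using \<psi>_back f_into \<phi>'_back unfolding g_def by (metis comp_apply)
    then have "\<phi>' a = \<phi>' b"
      using f(2) \<phi>'_back ab(1,2) by (auto dest: inj_onD)
    then show "a = b"
      using \<phi>'_back ab(1,2) by metis
  qed
  then have "open_map (subtopology ?E V) ?E g"
    using open_map_Euclidean_space_injective[OF U(1)] g_cont continuous_map_in_subtopology by blast
  then have "open_map (subtopology ?E V) (subtopology ?E V') g"
    using g_cont by (simp add: open_map_into_subtopology continuous_map_in_subtopology)
  then have "open_map (subtopology Z U) X (id \<circ> \<psi>' \<circ> g \<circ> \<phi>)"
    using \<phi> \<psi> homeomorphic_imp_open_map homeomorphic_map_maps homeomorphic_maps_sym
      open_map_inclusion[OF W(1)] open_map_compose
    by (metis comp_assoc)
  moreover have "(id \<circ> \<psi>' \<circ> g \<circ> \<phi>) z = f z" if "z \<in> topspace (subtopology Z U)" for z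
    using \<phi> that \<psi>_back f_into by (simp add: g_def homeomorphic_maps_def)
  ultimately show ?thesis
    by (rule open_map_eq)
qed

lemma open_map_locally_Euclidean:
  assumes Z: "locally_Euclidean n Z" and X: "locally_Euclidean n X"
    and f: "continuous_map Z X f" "inj_on f (topspace Z)"
  shows "open_map Z X f"
proof (rule open_map_if_locally_open)
  fix z assume z: "z \<in> topspace Z"
  then have "f z \<in> topspace X"
    using f(1) continuous_map_image_subset_topspace by blast
  then obtain W V' where W: "openin X W" "f z \<in> W"
      "subtopology X W homeomorphic_space subtopology (Euclidean_space n) V'"
    using X unfolding locally_Euclidean_def by blast
  define P where "P = {y \<in> topspace Z. f y \<in> W}"
  have P: "openin Z P"
    unfolding P_def using openin_continuous_map_preimage[OF f(1) W(1)] .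
  moreover have "z \<in> topspace (subtopology Z P)"
    using z W(2) by (simp add: P_def)
  ultimately obtain U V where U: "openin (subtopology Z P) U" "z \<in> U" "openin (Euclidean_space n) V"
      "subtopology (subtopology Z P) U homeomorphic_space subtopology (Euclidean_space n) V"
    using locally_Euclidean_open_subtopology[OF Z] unfolding locally_Euclidean_def by blast
  have UP: "U \<subseteq> P"
    using openin_subset[OF U(1)] by simp
  then have "subtopology (subtopology Z P) U = subtopology Z U"
    by (simp add: subtopology_subtopology Int_absorb1)
  moreover have "f ` U \<subseteq> W"
    using UP by (auto simp: P_def)
  moreover have "openin Z U"
    using openin_trans_full[OF U(1) P] .
  ultimately show "\<exists>U. openin Z U \<and> z \<in> U \<and> open_map (subtopology Z U) X f"
    using open_map_between_charts[OF f _ U(3) _ W(1,3)] U(2,4) by metis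
qed

lemma topspace_nsphere:
  "topspace (nsphere n) = {x. (\<Sum>i\<le>n. x i ^ 2) = 1 \<and> (\<forall>i>n. x i = 0)}"
  by (simp add: nsphere)

lemma continuous_map_into_nsphere:
  assumes "\<And>k. continuous_map X euclideanreal (\<lambda>x. f x k)"
    and "\<And>x. x \<in> topspace X \<Longrightarrow> f x \<in> topspace (nsphere n)"
  shows "continuous_map X (nsphere n) f"
  using assms unfolding nsphere
  by (auto simp: continuous_map_in_subtopology continuous_map_componentwise_UNIV)

lemma continuous_map_Euclidean_space_coordinate:
  "continuous_map (Euclidean_space n) euclideanreal (\<lambda>u. u i)"
  unfolding Euclidean_space_def
  by (rule continuous_map_from_subtopology)
    (use continuous_map_product_projection[of i UNIV "\<lambda>_. euclideanreal"] in simp)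

lemma Hausdorff_nsphere: "Hausdorff_space (nsphere n)"
  by (simp add: nsphere_def Hausdorff_space_subtopology Hausdorff_Euclidean_space)

lemma compact_space_nsphere: "compact_space (nsphere n)"
proof -
  define T where "T = {x::nat\<Rightarrow>real. (\<Sum>i\<le>n. x i ^ 2) = 1 \<and> (\<forall>i>n. x i = 0)}"
  have "continuous_map (powertop_real UNIV) euclideanreal (\<lambda>x. \<Sum>i\<le>n. x i ^ 2)"
    by (intro continuous_intros) auto
  then have c1: "closedin (powertop_real UNIV)
      {x \<in> topspace (powertop_real UNIV). (\<Sum>i\<le>n. x i ^ 2) \<in> {1}}"
    by (rule closedin_continuous_map_preimage) simp
  have c2: "closedin (powertop_real UNIV) (topspace (Euclidean_space (Suc n)))"
    by (rule closedin_Euclidean_space)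
  have "T = topspace (Euclidean_space (Suc n))
      \<inter> {x \<in> topspace (powertop_real UNIV). (\<Sum>i\<le>n. x i ^ 2) \<in> {1}}"
    unfolding T_def topspace_Euclidean_space by (auto simp: Suc_le_eq)
  then have closed: "closedin (powertop_real UNIV) T"
    using c1 c2 by (simp add: closedin_Int)
  have bounded: "T \<subseteq> UNIV \<rightarrow>\<^sub>E {-1..1}"
  proof
    fix x assume x: "x \<in> T"
    have "\<bar>x i\<bar> \<le> 1" for i
    proof (cases "i \<le> n")
      case True
      have "x i ^ 2 \<le> (\<Sum>j\<le>n. x j ^ 2)"
        using True by (intro member_le_sum) auto
      then have "x i ^ 2 \<le> 1"
        using x by (simp add: T_def)
      then show ?thesis
        by (simp add: abs_square_le_1)
    next
      case False
      then show ?thesis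
        using x by (simp add: T_def)
    qed
    then show "x \<in> UNIV \<rightarrow>\<^sub>E {-1..1}"
      by (auto simp: abs_le_iff)
  qed
  have "compactin (powertop_real UNIV) T"
    by (rule closed_compactin[OF _ bounded closed]) (simp add: compactin_PiE)
  then show ?thesis
    unfolding nsphere T_def[symmetric] by (rule compact_space_subtopology)
qed

lemma infinite_topspace_nsphere:
  assumes "n \<ge> 1" shows "infinite (topspace (nsphere n))"
proof -
  define p where "p a i = (if i = 0 then a else if i = 1 then sqrt (1 - a ^ 2) else 0)"
    for a :: real and i :: nat
  have "p a \<in> topspace (nsphere n)" if a: "a \<in> {0..1}" for a
  proof -
    have "(\<Sum>i\<le>n. p a i ^ 2) = (\<Sum>i\<in>{0,1}. p a i ^ 2)"
      using assms by (intro sum.mono_neutral_right) (auto simp: p_def)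
    also have "\<dots> = 1"
      using a by (simp add: p_def abs_square_le_1)
    finally show ?thesis
      by (auto simp: topspace_nsphere p_def)
  qed
  moreover have "inj_on p {0..1}"
    by (rule inj_onI) (metis p_def)
  then have "infinite (p ` {0..1})"
    by (simp add: finite_image_iff)
  ultimately show ?thesis
    using finite_subset by (metis image_subsetI)
qed

definition upper_hemisphere :: "nat \<Rightarrow> (nat \<Rightarrow> real) set" where
  "upper_hemisphere n = {x \<in> topspace (nsphere n). 0 < x n}"

definition Euclidean_unit_ball :: "nat \<Rightarrow> (nat \<Rightarrow> real) set" where
  "Euclidean_unit_ball n = {u \<in> topspace (Euclidean_space n). (\<Sum>i<n. u i ^ 2) < 1}"

definition hemisphere_lift :: "nat \<Rightarrow> (nat \<Rightarrow> real) \<Rightarrow> nat \<Rightarrow> real" where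
  "hemisphere_lift n u i = (if i < n then u i else if i = n then sqrt (1 - (\<Sum>j<n. u j ^ 2)) else 0)"

lemma upper_hemisphere_iff:
  "x \<in> upper_hemisphere n \<longleftrightarrow> (\<Sum>i<n. x i ^ 2) + x n ^ 2 = 1 \<and> 0 < x n \<and> (\<forall>i>n. x i = 0)"
  using sum.lessThan_Suc[of "\<lambda>i. x i ^ 2" n]
  by (auto simp: upper_hemisphere_def topspace_nsphere lessThan_Suc_atMost)

lemma Euclidean_unit_ball_iff:
  "u \<in> Euclidean_unit_ball n \<longleftrightarrow> (\<Sum>i<n. u i ^ 2) < 1 \<and> (\<forall>i\<ge>n. u i = 0)"
  by (auto simp: Euclidean_unit_ball_def topspace_Euclidean_space)

lemma openin_upper_hemisphere: "openin (nsphere n) (upper_hemisphere n)"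
  unfolding upper_hemisphere_def
  using openin_continuous_map_preimage[OF continuous_map_nsphere_projection[of n n], of "{0<..}"]
  by simp

lemma openin_Euclidean_unit_ball: "openin (Euclidean_space n) (Euclidean_unit_ball n)"
proof -
  have "continuous_map (Euclidean_space n) euclideanreal (\<lambda>u. \<Sum>i<n. u i ^ 2)"
    by (intro continuous_intros continuous_map_Euclidean_space_coordinate) auto
  from openin_continuous_map_preimage[OF this, of "{..<1}"] show ?thesis
    unfolding Euclidean_unit_ball_def by simp
qed

lemma hemisphere_lift_in_upper_hemisphere:
  assumes "u \<in> Euclidean_unit_ball n"
  shows "hemisphere_lift n u \<in> upper_hemisphere n"
proof -
  have "(\<Sum>i<n. hemisphere_lift n u i ^ 2) = (\<Sum>i<n. u i ^ 2)"
    by (rule sum.cong) (auto simp: hemisphere_lift_def)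
  then show ?thesis
    using assms by (auto simp: upper_hemisphere_iff Euclidean_unit_ball_iff hemisphere_lift_def)
qed

lemma continuous_map_hemisphere_lift:
  "continuous_map (subtopology (Euclidean_space n) (Euclidean_unit_ball n))
     (subtopology (nsphere n) (upper_hemisphere n)) (hemisphere_lift n)"
proof -
  have coord: "continuous_map (subtopology (Euclidean_space n) (Euclidean_unit_ball n))
      euclideanreal (\<lambda>u. u i)" for i
    by (rule continuous_map_from_subtopology[OF continuous_map_Euclidean_space_coordinate])
  have lift_in: "hemisphere_lift n u \<in> upper_hemisphere n"
    if "u \<in> topspace (subtopology (Euclidean_space n) (Euclidean_unit_ball n))" for u
    using that hemisphere_lift_in_upper_hemisphere by simp
  have "continuous_map (subtopology (Euclidean_space n) (Euclidean_unit_ball n)) (nsphere n)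
      (hemisphere_lift n)"
  proof (rule continuous_map_into_nsphere)
    show "continuous_map (subtopology (Euclidean_space n) (Euclidean_unit_ball n)) euclideanreal
        (\<lambda>u. hemisphere_lift n u k)" for k
      unfolding hemisphere_lift_def by (intro continuous_intros coord) auto
    show "hemisphere_lift n u \<in> topspace (nsphere n)"
      if "u \<in> topspace (subtopology (Euclidean_space n) (Euclidean_unit_ball n))" for u
      using lift_in[OF that] by (simp add: upper_hemisphere_def)
  qed
  then show ?thesis
    using lift_in by (simp add: continuous_map_in_subtopology)
qed

lemma homeomorphic_maps_upper_hemisphere:
  "homeomorphic_maps (subtopology (nsphere n) (upper_hemisphere n))
     (subtopology (Euclidean_space n) (Euclidean_unit_ball n))
     (\<lambda>x i. if i < n then x i else 0) (hemisphere_lift n)"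
proof -
  have truncate_sum: "(\<Sum>i<n. (if i < n then x i else 0) ^ 2) = (\<Sum>i<n. x i ^ 2)"
    for x :: "nat \<Rightarrow> real"
    by (rule sum.cong) auto
  show ?thesis
    unfolding homeomorphic_maps_def
  proof (intro conjI ballI)
    have "continuous_map (subtopology (nsphere n) (upper_hemisphere n)) (Euclidean_space n)
        (\<lambda>x i. if i < n then x i else 0)"
      by (rule continuous_map_componentwise_Euclidean_space[THEN iffD2])
        (auto intro: continuous_map_from_subtopology[OF continuous_map_nsphere_projection])
    moreover have "(\<lambda>i. if i < n then x i else 0) \<in> Euclidean_unit_ball n"
      if "x \<in> upper_hemisphere n" for x
    proof -
      have "0 < x n ^ 2"
        using that by (simp add: upper_hemisphere_iff)
      then have "(\<Sum>i<n. x i ^ 2) < 1"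
        using that unfolding upper_hemisphere_iff by linarith
      then show ?thesis
        by (simp add: Euclidean_unit_ball_iff truncate_sum)
    qed
    ultimately show "continuous_map (subtopology (nsphere n) (upper_hemisphere n))
        (subtopology (Euclidean_space n) (Euclidean_unit_ball n)) (\<lambda>x i. if i < n then x i else 0)"
      by (auto simp: continuous_map_in_subtopology)
    show "continuous_map (subtopology (Euclidean_space n) (Euclidean_unit_ball n))
        (subtopology (nsphere n) (upper_hemisphere n)) (hemisphere_lift n)"
      by (rule continuous_map_hemisphere_lift)
  next
    fix x assume "x \<in> topspace (subtopology (nsphere n) (upper_hemisphere n))"
    then have x: "(\<Sum>i<n. x i ^ 2) + x n ^ 2 = 1" "0 < x n" "\<forall>i>n. x i = 0"
      by (simp_all add: upper_hemisphere_iff)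
    then have "sqrt (1 - (\<Sum>i<n. x i ^ 2)) = x n"
      by (simp add: real_sqrt_unique algebra_simps)
    then show "hemisphere_lift n (\<lambda>i. if i < n then x i else 0) = x"
      using x(3) by (auto simp: hemisphere_lift_def truncate_sum fun_eq_iff)
  next
    fix u assume "u \<in> topspace (subtopology (Euclidean_space n) (Euclidean_unit_ball n))"
    then show "(\<lambda>i. if i < n then hemisphere_lift n u i else 0) = u"
      by (auto simp: Euclidean_unit_ball_iff hemisphere_lift_def fun_eq_iff)
  qed
qed

lemma homeomorphic_map_nsphere_permute:
  assumes \<sigma>: "\<sigma> permutes {..n}"
  shows "homeomorphic_map (nsphere n) (nsphere n) (\<lambda>x. x \<circ> \<sigma>)"
proof -
  have in_nsphere: "x \<circ> \<pi> \<in> topspace (nsphere n)"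
    if \<pi>: "\<pi> permutes {..n}" and x: "x \<in> topspace (nsphere n)" for \<pi> x
  proof -
    have "(\<Sum>i\<le>n. (x \<circ> \<pi>) i ^ 2) = (\<Sum>i\<le>n. x i ^ 2)"
      using sum.permute[OF \<pi>, of "\<lambda>i. x i ^ 2"] by (simp add: comp_def)
    moreover have "(x \<circ> \<pi>) i = 0" if "i > n" for i
      using x that permutes_not_in[OF \<pi>, of i] by (simp add: topspace_nsphere)
    ultimately show ?thesis
      using x by (simp add: topspace_nsphere)
  qed
  have cont: "continuous_map (nsphere n) (nsphere n) (\<lambda>x. x \<circ> \<pi>)" if "\<pi> permutes {..n}" for \<pi>
    by (rule continuous_map_into_nsphere)
      (simp_all add: continuous_map_nsphere_projection in_nsphere that)
  have "homeomorphic_maps (nsphere n) (nsphere n) (\<lambda>x. x \<circ> \<sigma>) (\<lambda>x. x \<circ> inv_into UNIV \<sigma>)"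
    unfolding homeomorphic_maps_def
    using cont \<sigma> permutes_inv[OF \<sigma>] permutes_inverses[OF \<sigma>] by (simp add: comp_def)
  then show ?thesis
    using homeomorphic_map_maps by blast
qed

lemma homeomorphic_map_nsphere_reflection:
  "homeomorphic_map (nsphere n) (nsphere n) (\<lambda>x i. if i = k then - x i else x i)"
proof -
  have "homeomorphic_maps (nsphere n) (nsphere n)
      (\<lambda>x i. if i = k then - x i else x i) (\<lambda>x i. if i = k then - x i else x i)"
    unfolding homeomorphic_maps_def
    using continuous_map_nsphere_reflection[of n k] by (simp add: fun_eq_iff)
  then show ?thesis
    using homeomorphic_map_maps by blast
qed

lemma nsphere_homeomorphism_into_upper_hemisphere:
  assumes x: "x \<in> topspace (nsphere n)"
  obtains T where "homeomorphic_map (nsphere n) (nsphere n) T" "T x \<in> upper_hemisphere n"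
proof -
  have "\<exists>k\<le>n. x k \<noteq> 0"
  proof (rule ccontr)
    assume "\<not> (\<exists>k\<le>n. x k \<noteq> 0)"
    then have "(\<Sum>i\<le>n. x i ^ 2) = 0"
      by simp
    then show False
      using x by (simp add: topspace_nsphere)
  qed
  then obtain k where k: "k \<le> n" "x k \<noteq> 0"
    by blast
  define \<sigma> where "\<sigma> = Transposition.transpose k n"
  have \<sigma>: "homeomorphic_map (nsphere n) (nsphere n) (\<lambda>x. x \<circ> \<sigma>)"
    unfolding \<sigma>_def using k(1) by (intro homeomorphic_map_nsphere_permute permutes_swap_id) auto
  then have \<sigma>x: "x \<circ> \<sigma> \<in> topspace (nsphere n)" "(x \<circ> \<sigma>) n = x k"
    using x homeomorphic_imp_surjective_map by (blast, simp add: \<sigma>_def)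
  show ?thesis
  proof (cases "x k > 0")
    case True
    then show ?thesis
      using that[OF \<sigma>] \<sigma>x by (simp add: upper_hemisphere_def)
  next
    case False
    let ?\<rho> = "\<lambda>x i. if i = n then - x i else x i"
    have "homeomorphic_map (nsphere n) (nsphere n) (?\<rho> \<circ> (\<lambda>x. x \<circ> \<sigma>))"
      by (rule homeomorphic_map_compose[OF \<sigma> homeomorphic_map_nsphere_reflection])
    moreover have "?\<rho> (x \<circ> \<sigma>) \<in> topspace (nsphere n)"
      using \<sigma>x(1) homeomorphic_map_nsphere_reflection homeomorphic_imp_surjective_map by blast
    ultimately show ?thesis
      using that False k(2) \<sigma>x(2) by (simp add: upper_hemisphere_def)
  qed
qed

lemma locally_Euclidean_if_homogeneous:
  assumes U: "openin X U" "openin (Euclidean_space n) V"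
      "subtopology X U homeomorphic_space subtopology (Euclidean_space n) V"
    and homogeneous: "\<And>x. x \<in> topspace X \<Longrightarrow> \<exists>T. homeomorphic_map X X T \<and> T x \<in> U"
  shows "locally_Euclidean n X"
  unfolding locally_Euclidean_def
proof
  fix x assume x: "x \<in> topspace X"
  obtain T where T: "homeomorphic_map X X T" "T x \<in> U"
    using homogeneous[OF x] by blast
  define U' where "U' = {y \<in> topspace X. T y \<in> U}"
  have "homeomorphic_map (subtopology X U') (subtopology X U) T"
    by (rule homeomorphic_map_subtopologies[OF T(1)])
      (use homeomorphic_imp_surjective_map[OF T(1)] in \<open>auto simp: U'_def\<close>)
  then have "subtopology X U' homeomorphic_space subtopology (Euclidean_space n) V"
    using U(3) homeomorphic_space homeomorphic_space_trans by blast
  moreover have "openin X U'"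
    unfolding U'_def
    using openin_continuous_map_preimage[OF homeomorphic_imp_continuous_map[OF T(1)] U(1)] .
  ultimately show "\<exists>U V. openin X U \<and> x \<in> U \<and> openin (Euclidean_space n) V \<and>
      subtopology X U homeomorphic_space subtopology (Euclidean_space n) V"
    using U(2) T(2) x unfolding U'_def by blast
qed

lemma locally_Euclidean_nsphere: "locally_Euclidean n (nsphere n)"
proof (rule locally_Euclidean_if_homogeneous[OF openin_upper_hemisphere openin_Euclidean_unit_ball])
  show "subtopology (nsphere n) (upper_hemisphere n) homeomorphic_space
      subtopology (Euclidean_space n) (Euclidean_unit_ball n)"
    using homeomorphic_maps_upper_hemisphere homeomorphic_space_def by blast
  show "\<exists>T. homeomorphic_map (nsphere n) (nsphere n) T \<and> T x \<in> upper_hemisphere n"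
    if "x \<in> topspace (nsphere n)" for x
    using nsphere_homeomorphism_into_upper_hemisphere[OF that] by metis
qed

lemma reconstructible_nsphere:
  assumes "n \<ge> 1" shows "reconstructible_in (nsphere n) TYPE('b)"
proof (rule reconstructible_if_extensions_open[OF compact_space_nsphere Hausdorff_nsphere
      infinite_topspace_nsphere[OF assms] in_topspace_nsphere])
  fix Z :: "'b topology" and q H
  assume deck: "same_deck Z (nsphere n)" and cont: "continuous_map Z (nsphere n) H"
    and bij: "bij_betw H (topspace Z) (topspace (nsphere n))"
  have "locally_Euclidean n Z"
    using locally_Euclidean_reconstruction[OF deck Hausdorff_nsphere
        infinite_topspace_nsphere[OF assms] locally_Euclidean_nsphere] .
  then show "open_map Z (nsphere n) H"
    using open_map_locally_Euclidean locally_Euclidean_nsphere cont bij bij_betw_imp_inj_on by blast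
qed

theorem theorem2p3:
  shows "reconstructible_in (top_of_set {0..1::real}) TYPE('b)
     \<and> (\<forall>n::nat. n \<ge> 1 \<longrightarrow> reconstructible_in (nsphere n) TYPE('b))"
proof
  show "reconstructible_in (top_of_set {0..1::real}) TYPE('b)"
    by (rule reconstructible_closed_interval) simp
  show "\<forall>n::nat. n \<ge> 1 \<longrightarrow> reconstructible_in (nsphere n) TYPE('b)"
    using reconstructible_nsphere by blast
qed

end
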